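(* Let $D\mapsto f_D$ be a functional summary with $f_D\in\mathcal{H}_{1,C}$ for all $D\in\mathcal{D}$, and suppose the global sensitivity $\Delta=\sup_{D\sim D'}\|f_D-f_{D'}\|_{1,C}$ (supremum over adjacent pairs) satisfies $0<\Delta<\infty$. Let $\epsilon>0$, $\sigma=\sqrt2\,\Delta/\epsilon$, and let $Z$ be an ICLP with mean $0$ and covariance operator $C$. Then the mechanism releasing $\tilde f_D=f_D+\sigma Z$ satisfies $\epsilon$-differential privacy.
   Context: $\mathbb{H}$ is a real separable infinite-dimensional Hilbert space. $C$ is a covariance operator on $\mathbb{H}$ with eigenvalues $\lambda_1\ge\lambda_2\ge\dots>0$ and eigenvectors $\{\phi_j\}_{j\ge1}$ forming an orthonormal basis of $\mathbb{H}$; $h_j=\langle h,\phi_j\rangle$. $\|h\|_{1,C}=\sum_j|h_j|/\sqrt{\lambda_j}$, $\mathcal{H}_{1,C}=\{h:\|h\|_{1,C}<\infty\}$. An ICLP with mean $\mu$ and covariance operator $C$ is the random element $\mu+\sum_{j\ge1}\sqrt{\lambda_j}Z_j\phi_j$ (series converging in $L^2(\Omega;\mathbb{H})$), where $Z_j$ are i.i.d. Laplace with mean $0$ and variance $1$, i.e. with density $\frac1{\sqrt2}e^{-\sqrt2|x|}$ (with this normalization the scale factor is $\sqrt2\Delta/\epsilon$; the paper writes $\Delta/\epsilon$ with Laplace-scale normalization). Datasets $D,D'$ are adjacent ($D\sim D'$) if they differ in exactly one record. The mechanism is $\epsilon$-differentially private if $P_D(A)\le e^{\epsilon}P_{D'}(A)$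 for all adjacent $D,D'$ and all Borel $A\subseteq\mathbb{H}$, where $P_D$ is the law of $\tilde f_D$. *)

theory Defs
  imports "HOL-Probability.Probability"
begin

definition orthonormal_basis :: "(nat \<Rightarrow> 'a::{real_inner,complete_space}) \<Rightarrow> bool" where
  "orthonormal_basis \<phi> \<longleftrightarrow>
     (\<forall>i j. \<phi> i \<bullet> \<phi> j = (if i = j then 1 else 0)) \<and> closure (span (range \<phi>)) = UNIV"

definition norm1C :: "(nat \<Rightarrow> real) \<Rightarrow> (nat \<Rightarrow> 'a::real_inner) \<Rightarrow> 'a \<Rightarrow> real" where
  "norm1C lam \<phi> h = (\<Sum>j. \<bar>h \<bullet> \<phi> j\<bar> / sqrt (lam j))"

definition in_H1C :: "(nat \<Rightarrow> real) \<Rightarrow> (nat \<Rightarrow> 'a::real_inner) \<Rightarrow> 'a \<Rightarrow> bool" where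
  "in_H1C lam \<phi> h \<longleftrightarrow> summable (\<lambda>j. \<bar>h \<bullet> \<phi> j\<bar> / sqrt (lam j))"

text \<open>Laplace density with mean 0 and variance 1.\<close>
definition laplace_density :: "real \<Rightarrow> real" where
  "laplace_density x = exp (- sqrt 2 * \<bar>x\<bar>) / sqrt 2"

text \<open>Z is an ICLP with mean mu and covariance operator with eigenpairs (lam j, phi j), on the
  probability space M: Z is the L^2(M;H)-limit of mu + sum_{j<n} sqrt(lam j) Z_j phi_j with
  Z_j i.i.d. standard (variance 1) Laplace.\<close>
definition is_ICLP :: "'w measure \<Rightarrow> (nat \<Rightarrow> real) \<Rightarrow> (nat \<Rightarrow> 'a::{real_inner,complete_space})
     \<Rightarrow> 'a \<Rightarrow> ('w \<Rightarrow> 'a) \<Rightarrow> bool" where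
  "is_ICLP M lam \<phi> \<mu> Z \<longleftrightarrow>
     Z \<in> borel_measurable M \<and>
     (\<exists>Zs :: nat \<Rightarrow> 'w \<Rightarrow> real.
        prob_space.indep_vars M (\<lambda>_. borel) Zs UNIV \<and>
        (\<forall>j. distributed M lborel (Zs j) (\<lambda>x. ennreal (laplace_density x))) \<and>
        (\<lambda>n. \<integral>\<^sup>+ \<omega>. ennreal ((norm (\<mu> + (\<Sum>j<n. (sqrt (lam j) * Zs j \<omega>) *\<^sub>R \<phi> j) - Z \<omega>))\<^sup>2) \<partial>M)
          \<longlonglongrightarrow> 0)"

definition adjacent :: "'r list \<Rightarrow> 'r list \<Rightarrow> bool" where
  "adjacent D D' \<longleftrightarrow> length D = length D' \<and> card {i. i < length D \<and> D ! i \<noteq> D' ! i} = 1"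

definition sensitivity :: "(nat \<Rightarrow> real) \<Rightarrow> (nat \<Rightarrow> 'a::real_inner) \<Rightarrow> 'r list set
     \<Rightarrow> ('r list \<Rightarrow> 'a) \<Rightarrow> ereal" where
  "sensitivity lam \<phi> Ds f =
     (SUP p \<in> {(D, D'). D \<in> Ds \<and> D' \<in> Ds \<and> adjacent D D'}.
        ereal (norm1C lam \<phi> (f (fst p) - f (snd p))))"

definition differentially_private :: "real \<Rightarrow> 'r list set \<Rightarrow> ('r list \<Rightarrow> 'a::topological_space measure) \<Rightarrow> bool" where
  "differentially_private \<epsilon> Ds P \<longleftrightarrow>
     (\<forall>D\<in>Ds. \<forall>D'\<in>Ds. adjacent D D' \<longrightarrow>
        (\<forall>A \<in> sets borel. measure (P D) A \<le> exp \<epsilon> * measure (P D') A))"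

end

theory Submission
  imports Defs
begin

(* Expanding in the eigenbasis, Z is the image of an i.i.d. Laplace sequence (Z_j) under the
   synthesis map z |-> sum_j sqrt(lam_j) z_j phi_j.  Translating Z by v amounts to translating
   the coefficients by d_j = v_j / sqrt(lam_j), whose l1-norm is the H_{1,C}-norm of v.  The
   Laplace density satisfies p(x - c) <= exp(sqrt 2 |c|) p(x), so by independence a translation
   of finitely many coefficients changes probabilities by at most exp(sqrt 2 sum_j |d_j|); since
   cylinder sets generate the product sigma-algebra, the bound holds for every summable d.  For
   adjacent D, D' the mechanisms differ by the translation v = (f_D - f_D') / sigma, whose cost
   exp(sqrt 2 ||v||_{1,C}) is at most exp(epsilon) by the choice of sigma. *)

section \<open>Orthonormal expansions\<close>

lemma orthonormal_basisD: "orthonormal_basis \<phi> \<Longrightarrow> \<phi> i \<bullet> \<phi> j = (if i = j then 1 else 0)"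
  by (simp add: orthonormal_basis_def)

context
  fixes \<phi> :: "nat \<Rightarrow> 'a::real_inner"
  assumes orthonormal: "\<And>i j. \<phi> i \<bullet> \<phi> j = (if i = j then 1 else 0)"
begin

lemma norm_sum_orthonormal_squared:
  assumes "finite F"
  shows "(norm (\<Sum>j\<in>F. a j *\<^sub>R \<phi> j))\<^sup>2 = (\<Sum>j\<in>F. (a j)\<^sup>2)"
proof -
  have "(norm (\<Sum>j\<in>F. a j *\<^sub>R \<phi> j))\<^sup>2 = (\<Sum>j\<in>F. \<Sum>i\<in>F. a j * (a i * (\<phi> i \<bullet> \<phi> j)))"
    by (simp add: power2_norm_eq_inner inner_sum_left inner_sum_right algebra_simps sum_distrib_left)
  also have "\<dots> = (\<Sum>j\<in>F. (a j)\<^sup>2)"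
    using assms by (simp add: orthonormal power2_eq_square if_distrib cong: if_cong)
  finally show ?thesis .
qed

lemma inner_sum_orthonormal: "k < n \<Longrightarrow> (\<Sum>j<n. a j *\<^sub>R \<phi> j) \<bullet> \<phi> k = a k"
  by (simp add: inner_sum_left orthonormal if_distrib cong: if_cong)

lemma bessel_inequality: "(\<Sum>j<n. (x \<bullet> \<phi> j)\<^sup>2) \<le> (norm x)\<^sup>2"
proof -
  define p where "p = (\<Sum>j<n. (x \<bullet> \<phi> j) *\<^sub>R \<phi> j)"
  have "x \<bullet> p = (\<Sum>j<n. (x \<bullet> \<phi> j)\<^sup>2)"
    by (simp add: p_def inner_sum_right power2_eq_square)
  moreover have "(norm p)\<^sup>2 = (\<Sum>j<n. (x \<bullet> \<phi> j)\<^sup>2)"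
    unfolding p_def by (simp add: norm_sum_orthonormal_squared)
  moreover have "(norm (x - p))\<^sup>2 = (norm x)\<^sup>2 - 2 * (x \<bullet> p) + (norm p)\<^sup>2"
    by (simp add: power2_norm_eq_inner inner_diff_left inner_diff_right inner_commute)
  ultimately show ?thesis
    using zero_le_power2[of "norm (x - p)"] by linarith
qed

lemma summable_bessel: "summable (\<lambda>j. (x \<bullet> \<phi> j)\<^sup>2)"
  by (rule summableI_nonneg_bounded[where x="(norm x)\<^sup>2"]) (auto intro: bessel_inequality)

lemma inner_orthonormal_series_limit:
  assumes "(\<lambda>n. \<Sum>j<n. a j *\<^sub>R \<phi> j) \<longlonglongrightarrow> g"
  shows "g \<bullet> \<phi> k = a k"
proof (rule LIMSEQ_unique)
  show "(\<lambda>n. (\<Sum>j<n. a j *\<^sub>R \<phi> j) \<bullet> \<phi> k) \<longlonglongrightarrow> g \<bullet> \<phi> k"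
    by (intro tendsto_inner assms tendsto_const)
  show "(\<lambda>n. (\<Sum>j<n. a j *\<^sub>R \<phi> j) \<bullet> \<phi> k) \<longlonglongrightarrow> a k"
    by (rule tendsto_eventually, rule eventually_sequentiallyI[of "Suc k"])
       (simp add: inner_sum_orthonormal)
qed

end

lemma convergent_orthonormal_series:
  fixes \<phi> :: "nat \<Rightarrow> 'a::{real_inner,complete_space}"
  assumes orthonormal: "\<And>i j. \<phi> i \<bullet> \<phi> j = (if i = j then 1 else 0)"
    and "summable (\<lambda>j. (a j)\<^sup>2)"
  shows "convergent (\<lambda>n. \<Sum>j<n. a j *\<^sub>R \<phi> j)"
proof (rule Cauchy_convergent, rule metric_CauchyI)
  fix e :: real assume "e > 0"
  then obtain N where N: "\<And>m n. N \<le> m \<Longrightarrow> norm (\<Sum>j=m..<n. (a j)\<^sup>2) < e\<^sup>2"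
    using assms(2) unfolding summable_Cauchy by (metis zero_less_power)
  have "dist (\<Sum>j<m. a j *\<^sub>R \<phi> j) (\<Sum>j<n. a j *\<^sub>R \<phi> j) < e" if "N \<le> m" "m \<le> n" for m n
  proof -
    have "(\<Sum>j<n. a j *\<^sub>R \<phi> j) = (\<Sum>j<m. a j *\<^sub>R \<phi> j) + (\<Sum>j=m..<n. a j *\<^sub>R \<phi> j)"
      using that by (metis sum.atLeastLessThan_concat lessThan_atLeast0 le0)
    moreover have "(norm (\<Sum>j=m..<n. a j *\<^sub>R \<phi> j))\<^sup>2 < e\<^sup>2"
      using N[of m n] that by (simp add: norm_sum_orthonormal_squared[OF orthonormal])
    ultimately show ?thesis
      using \<open>e > 0\<close> by (simp add: dist_norm norm_minus_commute power_less_imp_less_base)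
  qed
  then show "\<exists>M. \<forall>m\<ge>M. \<forall>n\<ge>M. dist (\<Sum>j<m. a j *\<^sub>R \<phi> j) (\<Sum>j<n. a j *\<^sub>R \<phi> j) < e"
    by (metis dist_commute nle_le)
qed

lemma orthonormal_basis_eqI:
  fixes \<phi> :: "nat \<Rightarrow> 'a::{real_inner,complete_space}"
  assumes "orthonormal_basis \<phi>" and "\<And>k. u \<bullet> \<phi> k = v \<bullet> \<phi> k"
  shows "u = v"
proof -
  let ?T = "{x. (u - v) \<bullet> x = 0}"
  have "span (range \<phi>) \<subseteq> ?T"
    by (rule span_minimal) (auto simp: assms(2) inner_diff_left subspace_def inner_add_right)
  then have "closure (span (range \<phi>)) \<subseteq> ?T"
    by (rule closure_minimal) (rule closed_hyperplane)
  then have "(u - v) \<bullet> (u - v) = 0"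
    using assms(1) unfolding orthonormal_basis_def by blast
  then show ?thesis by simp
qed

lemma orthonormal_basis_expansion:
  fixes \<phi> :: "nat \<Rightarrow> 'a::{real_inner,complete_space}"
  assumes onb: "orthonormal_basis \<phi>"
  shows "(\<lambda>n. \<Sum>j<n. (h \<bullet> \<phi> j) *\<^sub>R \<phi> j) \<longlonglongrightarrow> h"
proof -
  note orthonormal = orthonormal_basisD[OF onb]
  obtain g where g: "(\<lambda>n. \<Sum>j<n. (h \<bullet> \<phi> j) *\<^sub>R \<phi> j) \<longlonglongrightarrow> g"
    using convergent_orthonormal_series[OF orthonormal summable_bessel[OF orthonormal]]
    by (auto simp: convergent_def)
  moreover have "g = h"
    by (rule orthonormal_basis_eqI[OF onb]) (rule inner_orthonormal_series_limit[OF orthonormal g])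
  ultimately show ?thesis by simp
qed

section \<open>Extending measure inequalities from a generating algebra\<close>

context
  fixes \<mu> \<nu> :: "'a measure" and G :: "'a set set"
  assumes finite: "finite_measure \<mu>" "finite_measure \<nu>"
    and space: "space \<mu> = UNIV" and sets_eq: "sets \<nu> = sets \<mu>"
    and generated: "sets \<mu> = sigma_sets UNIV G" and algebra: "algebra UNIV G"
begin

definition joint_measure :: "'a set \<Rightarrow> real" where
  "joint_measure X = measure \<mu> X + measure \<nu> X"

definition approximable :: "'a set \<Rightarrow> bool" where
  "approximable A \<longleftrightarrow> (\<forall>e>0. \<exists>B\<in>G. joint_measure (sym_diff A B) < e)"

lemma joint_measure_mono: "X \<subseteq> Y \<Longrightarrow> Y \<in> sets \<mu> \<Longrightarrow> joint_measure X \<le> joint_measure Y"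
  unfolding joint_measure_def using finite space sets_eq
  by (intro add_mono finite_measure.finite_measure_mono) auto

lemma joint_measure_Un_le:
  "X \<in> sets \<mu> \<Longrightarrow> Y \<in> sets \<mu> \<Longrightarrow> joint_measure (X \<union> Y) \<le> joint_measure X + joint_measure Y"
  unfolding joint_measure_def using measure_Un_le[of X \<mu> Y] measure_Un_le[of X \<nu> Y] sets_eq
  by auto

lemma algebra_subset_sets: "G \<subseteq> sets \<mu>"
  using generated sigma_sets_superset_generator by blast

lemma LIMSEQ_joint_measure_UN:
  assumes "\<And>i. A i \<in> sets \<mu>"
  shows "(\<lambda>N. joint_measure (\<Union>i<N. A i)) \<longlonglongrightarrow> joint_measure (\<Union>i. A i)"
proof -
  have "(\<lambda>N. measure M (\<Union>i<N. A i)) \<longlonglongrightarrow> measure M (\<Union>i. A i)"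
    if "finite_measure M" "sets M = sets \<mu>" for M
  proof -
    have "(\<Union>N. \<Union>i<N. A i) = (\<Union>i. A i)" by blast
    moreover have "incseq (\<lambda>N. \<Union>i<N. A i)"
      by (auto simp: incseq_def intro: less_le_trans)
    moreover have "range (\<lambda>N. \<Union>i<N. A i) \<subseteq> sets M"
      using assms that(2) by (auto intro!: sets.finite_UN)
    ultimately show ?thesis
      using finite_measure.finite_Lim_measure_incseq[OF that(1), of "\<lambda>N. \<Union>i<N. A i"] by auto
  qed
  then show ?thesis
    unfolding joint_measure_def using finite sets_eq by (intro tendsto_add) auto
qed

lemma approximable_Un:
  assumes "approximable A" "approximable A'" "A \<in> sets \<mu>" "A' \<in> sets \<mu>"
  shows "approximable (A \<union> A')"
  unfolding approximable_def
proof (intro allI impI)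
  fix e :: real assume "e > 0"
  then obtain B B' where B: "B \<in> G" "joint_measure (sym_diff A B) < e / 2"
    and B': "B' \<in> G" "joint_measure (sym_diff A' B') < e / 2"
    using assms(1,2) unfolding approximable_def by (meson half_gt_zero)
  have sets: "B \<in> sets \<mu>" "B' \<in> sets \<mu>"
    using B(1) B'(1) algebra_subset_sets by auto
  have "joint_measure (sym_diff (A \<union> A') (B \<union> B'))
      \<le> joint_measure ((sym_diff A B) \<union> (sym_diff A' B'))"
    using assms(3,4) sets by (intro joint_measure_mono) auto
  also have "\<dots> \<le> joint_measure (sym_diff A B) + joint_measure (sym_diff A' B')"
    using assms(3,4) sets by (intro joint_measure_Un_le) auto
  finally show "\<exists>C\<in>G. joint_measure (sym_diff (A \<union> A') C) < e"
    using B B' algebra unfolding algebra_iff_Un by (intro bexI[of _ "B \<union> B'"]) auto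
qed

lemma approximable_UNION:
  fixes A :: "nat \<Rightarrow> 'a set"
  assumes approx: "\<And>i. approximable (A i)" and sets: "\<And>i. A i \<in> sets \<mu>"
  shows "approximable (\<Union>i. A i)"
  unfolding approximable_def
proof (intro allI impI)
  fix e :: real assume "e > 0"
  have finite_unions: "approximable (\<Union>i<N. A i) \<and> (\<Union>i<N. A i) \<in> sets \<mu>" for N
  proof (induction N)
    case 0
    have "{} \<in> G" using algebra unfolding algebra_iff_Un by blast
    then show ?case
      by (auto simp: approximable_def joint_measure_def intro!: bexI[of _ "{}"])
  next
    case (Suc N)
    then show ?case
      using approximable_Un[OF approx[of N] _ sets[of N]] sets by (auto simp: lessThan_Suc)
  qed
  have "(\<lambda>N. joint_measure (\<Union>i<N. A i)) \<longlonglongrightarrow> joint_measure (\<Union>i. A i)"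
    using sets by (rule LIMSEQ_joint_measure_UN)
  then obtain N where N: "joint_measure (\<Union>i. A i) - joint_measure (\<Union>i<N. A i) < e / 2"
    using \<open>e > 0\<close> by (metis LIMSEQ_iff half_gt_zero le_refl real_norm_def abs_less_iff minus_diff_eq)
  obtain B where B: "B \<in> G" "joint_measure (sym_diff (\<Union>i<N. A i) B) < e / 2"
    using finite_unions[of N] \<open>e > 0\<close> unfolding approximable_def by (meson half_gt_zero)
  let ?U = "\<Union>i. A i" and ?U\<^sub>N = "\<Union>i<N. A i"
  have U_sets: "?U \<in> sets \<mu>" "?U\<^sub>N \<in> sets \<mu>" "B \<in> sets \<mu>"
    using sets B(1) algebra_subset_sets by auto
  have "joint_measure (?U - ?U\<^sub>N) = joint_measure ?U - joint_measure ?U\<^sub>N"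
    unfolding joint_measure_def using finite U_sets sets_eq
    by (simp add: finite_measure.finite_measure_Diff UN_mono)
  have "joint_measure (sym_diff ?U B) \<le> joint_measure ((?U - ?U\<^sub>N) \<union> (sym_diff ?U\<^sub>N B))"
    using U_sets by (intro joint_measure_mono) auto
  also have "\<dots> \<le> joint_measure (?U - ?U\<^sub>N) + joint_measure (sym_diff ?U\<^sub>N B)"
    using U_sets by (intro joint_measure_Un_le) auto
  finally show "\<exists>B\<in>G. joint_measure (sym_diff ?U B) < e"
    using B N \<open>joint_measure (?U - ?U\<^sub>N) = _\<close> by (intro bexI[of _ B]) auto
qed

lemma approximable_sets:
  assumes "A \<in> sets \<mu>"
  shows "approximable A"
proof -
  have "A \<in> sigma_sets UNIV G" using assms generated by simp
  then show ?thesis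
  proof (induction rule: sigma_sets.induct)
    case (Basic A)
    then show ?case
      by (auto simp: approximable_def joint_measure_def intro!: bexI[of _ A])
  next
    case Empty
    have "{} \<in> G" using algebra unfolding algebra_iff_Un by blast
    then show ?case
      by (auto simp: approximable_def joint_measure_def intro!: bexI[of _ "{}"])
  next
    case (Compl A)
    have "sym_diff (UNIV - A) (UNIV - B) = sym_diff A B" for B
      by auto
    moreover have "UNIV - B \<in> G" if "B \<in> G" for B
      using algebra that unfolding algebra_iff_Un by blast
    ultimately show ?case
      using Compl.IH unfolding approximable_def by metis
  next
    case (Union A)
    then show ?case
      using approximable_UNION generated by auto
  qed
qed

lemma measure_le_extend_from_algebra:
  assumes K: "0 \<le> K" and le: "\<And>B. B \<in> G \<Longrightarrow> measure \<nu> B \<le> K * measure \<mu> B"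
    and A: "A \<in> sets \<mu>"
  shows "measure \<nu> A \<le> K * measure \<mu> A"
proof (rule field_le_epsilon)
  fix e :: real assume "e > 0"
  then obtain B where B: "B \<in> G" "joint_measure (sym_diff A B) < e / (K + 1)"
    using approximable_sets[OF A] K unfolding approximable_def by (meson add_nonneg_pos divide_pos_pos zero_less_one)
  interpret \<mu>: finite_measure \<mu> by (rule finite(1))
  interpret \<nu>: finite_measure \<nu> by (rule finite(2))
  have sets: "B \<in> sets \<mu>" "sym_diff A B \<in> sets \<mu>"
    using A B(1) algebra_subset_sets by auto
  have "measure \<mu> B \<le> measure \<mu> (A \<union> sym_diff A B)"
    using A sets by (intro \<mu>.finite_measure_mono) auto
  then have \<mu>B: "measure \<mu> B \<le> measure \<mu> A + measure \<mu> (sym_diff A B)"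
    using measure_Un_le[of A \<mu> "sym_diff A B"] A sets by simp
  have "measure \<nu> A \<le> measure \<nu> (B \<union> sym_diff A B)"
    using sets sets_eq by (intro \<nu>.finite_measure_mono) auto
  also have "\<dots> \<le> measure \<nu> B + measure \<nu> (sym_diff A B)"
    using sets sets_eq by (intro measure_Un_le) auto
  also have "measure \<nu> B \<le> K * measure \<mu> A + K * measure \<mu> (sym_diff A B)"
    using le[OF B(1)] mult_left_mono[OF \<mu>B K] by (simp add: distrib_left)
  finally have "measure \<nu> A \<le> K * measure \<mu> A + (K + 1) * joint_measure (sym_diff A B)"
    unfolding joint_measure_def
    using mult_nonneg_nonneg[OF K measure_nonneg[of \<nu> "sym_diff A B"]]
    by (simp add: algebra_simps) (smt (verit) measure_nonneg)
  also have "(K + 1) * joint_measure (sym_diff A B) \<le> e"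
    using B(2) K by (simp add: field_simps)
  finally show "measure \<nu> A \<le> K * measure \<mu> A + e" by simp
qed

end

section \<open>The Laplace distribution and its translates\<close>

definition laplace_measure :: "real measure" where
  "laplace_measure = density lborel (\<lambda>x. ennreal (laplace_density x))"

lemma laplace_density_borel[measurable]: "laplace_density \<in> borel_measurable borel"
  unfolding laplace_density_def by measurable

lemma sets_laplace_measure[simp, measurable_cong]: "sets laplace_measure = sets borel"
  by (simp add: laplace_measure_def)

lemma space_laplace_measure[simp]: "space laplace_measure = UNIV"
  by (simp add: laplace_measure_def)

lemma prob_space_laplace_measure: "prob_space laplace_measure"
proof -
  let ?e = "exponential_density (sqrt 2)"
  have e: "(\<integral>\<^sup>+x. ennreal (?e x) \<partial>lborel) = 1"
    using prob_space.emeasure_space_1[OF prob_space_exponential_density[of "sqrt 2"]]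
    by (simp add: emeasure_density)
  have e_reflected: "(\<integral>\<^sup>+x. ennreal (?e (- x)) \<partial>lborel) = 1"
    using nn_integral_real_affine[of "\<lambda>x. ennreal (?e x)" "-1" 0] e by simp
  have split: "laplace_density x = ?e x / 2 + ?e (- x) / 2" if "x \<noteq> 0" for x
  proof -
    have r: "2 * y / sqrt 2 = sqrt 2 * y" for y :: real
      by (simp add: field_simps)
    show ?thesis
      using that by (auto simp: laplace_density_def exponential_density_def abs_if mult.commute r)
  qed
  have "AE x in lborel. x \<noteq> 0"
    by (rule AE_I[where N="{0}"]) auto
  then have "(\<integral>\<^sup>+x. ennreal (laplace_density x) \<partial>lborel)
      = (\<integral>\<^sup>+x. ennreal (?e x) / 2 + ennreal (?e (- x)) / 2 \<partial>lborel)"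
    by (rule nn_integral_cong_AE[OF AE_mp], intro AE_I2 impI)
       (simp add: split exponential_density_nonneg divide_ennreal[symmetric] ennreal_plus[symmetric])
  also have "\<dots> = 1 / 2 + 1 / 2"
    by (simp add: nn_integral_add nn_integral_divide e e_reflected)
  also have "\<dots> = (1::ennreal)"
    by (simp add: add_divide_distrib_ennreal[symmetric])
  finally show ?thesis
    unfolding laplace_measure_def by (intro prob_spaceI) (simp add: emeasure_density)
qed

lemma laplace_density_translate_le:
  "laplace_density (x - c) \<le> exp (sqrt 2 * \<bar>c\<bar>) * laplace_density x"
proof -
  have "sqrt 2 * \<bar>x\<bar> \<le> sqrt 2 * (\<bar>x - c\<bar> + \<bar>c\<bar>)"
    by (intro mult_left_mono) auto
  then have "exp (- sqrt 2 * \<bar>x - c\<bar>) \<le> exp (sqrt 2 * \<bar>c\<bar>) * exp (- sqrt 2 * \<bar>x\<bar>)"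
    by (simp add: exp_add[symmetric] distrib_left)
  then show ?thesis
    unfolding laplace_density_def by (simp add: divide_right_mono)
qed

lemma emeasure_laplace_translate_le:
  assumes S[measurable]: "S \<in> sets borel"
  shows "emeasure laplace_measure ((\<lambda>x. x + c) -` S)
    \<le> ennreal (exp (sqrt 2 * \<bar>c\<bar>)) * emeasure laplace_measure S"
proof -
  have [measurable]: "(\<lambda>x. x + c) -` S \<in> sets borel"
    by (rule measurable_sets_borel[OF _ S]) simp
  have "emeasure laplace_measure ((\<lambda>x. x + c) -` S)
      = (\<integral>\<^sup>+x. ennreal (laplace_density x) * indicator S (x + c) \<partial>lborel)"
    unfolding laplace_measure_def
    by (subst emeasure_density) (auto intro!: nn_integral_cong split: split_indicator)
  also have "\<dots> = (\<integral>\<^sup>+x. ennreal (laplace_density (- c + 1 * x)) * indicator S (- c + 1 * x + c) \<partial>lborel)"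
    by (subst nn_integral_real_affine[where c=1 and t="-c"]) auto
  also have "\<dots> = (\<integral>\<^sup>+x. ennreal (laplace_density (x - c)) * indicator S x \<partial>lborel)"
    by simp
  also have "\<dots> \<le> (\<integral>\<^sup>+x. ennreal (exp (sqrt 2 * \<bar>c\<bar>)) * (ennreal (laplace_density x) * indicator S x) \<partial>lborel)"
    using laplace_density_translate_le
    by (intro nn_integral_mono) (auto simp: ennreal_mult'[symmetric] ennreal_leI split: split_indicator)
  also have "\<dots> = ennreal (exp (sqrt 2 * \<bar>c\<bar>)) * emeasure laplace_measure S"
    unfolding laplace_measure_def by (subst nn_integral_cmult) (auto simp: emeasure_density)
  finally show ?thesis .
qed

abbreviation sequence_borel :: "(nat \<Rightarrow> real) measure" where
  "sequence_borel \<equiv> \<Pi>\<^sub>M j\<in>UNIV. borel"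

lemma space_sequence_borel[simp]: "space sequence_borel = UNIV"
  by (simp add: space_PiM)

definition laplace_product :: "(nat \<Rightarrow> real) measure" where
  "laplace_product = (\<Pi>\<^sub>M j\<in>UNIV. laplace_measure)"

lemma sets_laplace_product[simp, measurable_cong]: "sets laplace_product = sets sequence_borel"
  unfolding laplace_product_def by (rule sets_PiM_cong) auto

lemma space_laplace_product[simp]: "space laplace_product = UNIV"
  by (simp add: laplace_product_def space_PiM)

lemma prob_space_laplace_product: "prob_space laplace_product"
  unfolding laplace_product_def by (intro prob_space_PiM prob_space_laplace_measure)

definition translate :: "(nat \<Rightarrow> real) \<Rightarrow> (nat \<Rightarrow> real) \<Rightarrow> nat \<Rightarrow> real" where
  "translate d z = (\<lambda>j. z j + d j)"

lemma measurable_translate[measurable]: "translate d \<in> measurable sequence_borel sequence_borel"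
  unfolding translate_def by (rule measurable_PiM_single') auto

lemma vimage_translate_sets: "B \<in> sets sequence_borel \<Longrightarrow> translate d -` B \<in> sets sequence_borel"
  using measurable_sets[OF measurable_translate[of d], of B] by simp

lemma translate_zero: "translate (\<lambda>_. 0) = (\<lambda>z. z)"
  by (simp add: translate_def fun_eq_iff)

lemma distr_insert_coordinate_laplace_product:
  "distr (laplace_measure \<Otimes>\<^sub>M (\<Pi>\<^sub>M j\<in>UNIV - {k}. laplace_measure)) laplace_product
     (\<lambda>p. (snd p)(k := fst p)) = laplace_product"
  using distr_pair_PiM_eq_PiM[of "UNIV - {k}" "\<lambda>_. laplace_measure" k] prob_space_laplace_measure
  unfolding laplace_product_def by (simp add: insert_absorb case_prod_beta')

lemma measurable_insert_coordinate:
  "(\<lambda>p. (snd p)(k := fst p))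
     \<in> measurable (laplace_measure \<Otimes>\<^sub>M (\<Pi>\<^sub>M j\<in>UNIV - {k}. laplace_measure)) sequence_borel"
proof (rule measurable_PiM_single')
  fix i :: nat
  let ?R = "\<Pi>\<^sub>M j\<in>UNIV - {k}. laplace_measure"
  show "(\<lambda>p. ((snd p)(k := fst p)) i) \<in> borel_measurable (laplace_measure \<Otimes>\<^sub>M ?R)"
  proof (cases "i = k")
    case True
    then show ?thesis by simp
  next
    case False
    have "(\<lambda>X. X i) \<in> measurable ?R laplace_measure"
      using False by (intro measurable_component_singleton) auto
    then have "(\<lambda>X. X i) \<in> borel_measurable ?R"
      by (simp add: measurable_cong_sets[OF refl sets_laplace_measure])
    then show ?thesis
      using False by (simp add: measurable_compose[OF measurable_snd])
  qed
qed auto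

text \<open>Integrating out all coordinates but the k-th reduces a translation in that coordinate
  to the one-dimensional estimate.\<close>
lemma emeasure_laplace_product_translate_coordinate_le:
  assumes B[measurable]: "B \<in> sets sequence_borel"
  shows "emeasure laplace_product (translate ((\<lambda>_. 0)(k := c)) -` B)
    \<le> ennreal (exp (sqrt 2 * \<bar>c\<bar>)) * emeasure laplace_product B"
proof -
  define R where "R = (\<Pi>\<^sub>M j\<in>UNIV - {k}. laplace_measure)"
  define ins where "ins = (\<lambda>p :: real \<times> (nat \<Rightarrow> real). (snd p)(k := fst p))"
  interpret L: prob_space laplace_measure by (rule prob_space_laplace_measure)
  interpret R: prob_space R unfolding R_def by (intro prob_space_PiM prob_space_laplace_measure)
  interpret LR: pair_sigma_finite laplace_measure R ..
  have distr_ins: "distr (laplace_measure \<Otimes>\<^sub>M R) laplace_product ins = laplace_product"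
    unfolding R_def ins_def by (rule distr_insert_coordinate_laplace_product)
  have [measurable]: "ins \<in> measurable (laplace_measure \<Otimes>\<^sub>M R) sequence_borel"
    unfolding R_def ins_def by (rule measurable_insert_coordinate)
  define \<Phi> where "\<Phi> a = {p \<in> space (laplace_measure \<Otimes>\<^sub>M R). ins (fst p + a, snd p) \<in> B}" for a
  have \<Phi>_sets: "\<Phi> a \<in> sets (laplace_measure \<Otimes>\<^sub>M R)" for a
    unfolding \<Phi>_def by measurable
  have section_integral: "emeasure laplace_product (translate ((\<lambda>_. 0)(k := a)) -` B)
      = (\<integral>\<^sup>+X. emeasure laplace_measure ((\<lambda>x. (x, X)) -` \<Phi> a) \<partial>R)" for a
  proof -
    have "ins -` (translate ((\<lambda>_. 0)(k := a)) -` B) \<inter> space (laplace_measure \<Otimes>\<^sub>M R) = \<Phi> a"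
      by (auto simp: \<Phi>_def ins_def translate_def fun_upd_def if_distrib cong: if_cong)
    then show ?thesis
      using vimage_translate_sets[OF B]
      by (subst distr_ins[symmetric], subst emeasure_distr)
         (simp_all add: LR.emeasure_pair_measure_alt2[OF \<Phi>_sets])
  qed
  have "emeasure laplace_product (translate ((\<lambda>_. 0)(k := c)) -` B)
      \<le> (\<integral>\<^sup>+X. ennreal (exp (sqrt 2 * \<bar>c\<bar>)) * emeasure laplace_measure ((\<lambda>x. (x, X)) -` \<Phi> 0) \<partial>R)"
    unfolding section_integral
  proof (rule nn_integral_mono)
    fix X assume "X \<in> space R"
    then have section_translated: "(\<lambda>x. (x, X)) -` \<Phi> c = (\<lambda>x. x + c) -` ((\<lambda>x. (x, X)) -` \<Phi> 0)"
      unfolding \<Phi>_def by (auto simp: space_pair_measure)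
    have "(\<lambda>x. (x, X)) -` \<Phi> 0 \<in> sets borel"
      using sets_Pair2[OF \<Phi>_sets[of 0]] by simp
    then show "emeasure laplace_measure ((\<lambda>x. (x, X)) -` \<Phi> c)
        \<le> ennreal (exp (sqrt 2 * \<bar>c\<bar>)) * emeasure laplace_measure ((\<lambda>x. (x, X)) -` \<Phi> 0)"
      unfolding section_translated by (rule emeasure_laplace_translate_le)
  qed
  also have "\<dots> = ennreal (exp (sqrt 2 * \<bar>c\<bar>)) * emeasure laplace_product B"
  proof -
    have "translate ((\<lambda>_. 0)(k := 0)) -` B = B"
      by (simp add: fun_upd_idem translate_zero)
    then show ?thesis
      using section_integral[of 0] by (simp add: nn_integral_cmult LR.measurable_emeasure_Pair2[OF \<Phi>_sets])
  qed
  finally show ?thesis .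
qed

lemma emeasure_laplace_product_translate_finite_le:
  assumes "\<And>j. n \<le> j \<Longrightarrow> d j = 0" and "B \<in> sets sequence_borel"
  shows "emeasure laplace_product (translate d -` B)
    \<le> ennreal (exp (sqrt 2 * (\<Sum>j<n. \<bar>d j\<bar>))) * emeasure laplace_product B"
  using assms
proof (induction n arbitrary: d B)
  case 0
  then have "d = (\<lambda>_. 0)" by auto
  then show ?case by (simp add: translate_zero)
next
  case (Suc n)
  let ?d' = "d(n := 0)"
  have "translate d z = translate ?d' (translate ((\<lambda>_. 0)(n := d n)) z)" for z
    by (simp add: translate_def fun_eq_iff)
  then have "translate d -` B = translate ((\<lambda>_. 0)(n := d n)) -` (translate ?d' -` B)"
    by auto
  then have "emeasure laplace_product (translate d -` B)
      \<le> ennreal (exp (sqrt 2 * \<bar>d n\<bar>)) * emeasure laplace_product (translate ?d' -` B)"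
    by (simp add: emeasure_laplace_product_translate_coordinate_le vimage_translate_sets Suc.prems)
  also have "\<dots> \<le> ennreal (exp (sqrt 2 * \<bar>d n\<bar>))
      * (ennreal (exp (sqrt 2 * (\<Sum>j<n. \<bar>?d' j\<bar>))) * emeasure laplace_product B)"
    using Suc.prems by (intro mult_left_mono Suc.IH) (auto simp: not_less_eq_eq)
  also have "(\<Sum>j<n. \<bar>?d' j\<bar>) = (\<Sum>j<n. \<bar>d j\<bar>)"
    by (intro sum.cong) auto
  also have "ennreal (exp (sqrt 2 * \<bar>d n\<bar>)) * (ennreal (exp (sqrt 2 * (\<Sum>j<n. \<bar>d j\<bar>))) * emeasure laplace_product B)
      = ennreal (exp (sqrt 2 * (\<Sum>j<Suc n. \<bar>d j\<bar>))) * emeasure laplace_product B"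
  proof -
    have "exp (sqrt 2 * (\<Sum>j<Suc n. \<bar>d j\<bar>)) = exp (sqrt 2 * \<bar>d n\<bar>) * exp (sqrt 2 * (\<Sum>j<n. \<bar>d j\<bar>))"
      by (simp add: distrib_left exp_add[symmetric] add.commute)
    then show ?thesis
      by (simp add: ennreal_mult mult.assoc)
  qed
  finally show ?case .
qed

definition cylinder_sets :: "(nat \<Rightarrow> real) set set" where
  "cylinder_sets = {B \<in> sets sequence_borel. \<exists>n. \<forall>z z'. (\<forall>j<n. z j = z' j) \<longrightarrow> (z \<in> B \<longleftrightarrow> z' \<in> B)}"

lemma algebra_cylinder_sets: "algebra UNIV cylinder_sets"
  unfolding algebra_iff_Un
proof (intro conjI ballI)
  show "cylinder_sets \<subseteq> Pow UNIV" "{} \<in> cylinder_sets"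
    by (auto simp: cylinder_sets_def)
  fix B assume "B \<in> cylinder_sets"
  then show "UNIV - B \<in> cylinder_sets"
    using sets.compl_sets[of B sequence_borel] by (auto simp: cylinder_sets_def)
next
  fix B C assume "B \<in> cylinder_sets" "C \<in> cylinder_sets"
  then obtain n m where B: "B \<in> sets sequence_borel" and C: "C \<in> sets sequence_borel"
    and n: "\<And>z z'. \<forall>j<n. z j = z' j \<Longrightarrow> z \<in> B \<longleftrightarrow> z' \<in> B"
    and m: "\<And>z z'. \<forall>j<m. z j = z' j \<Longrightarrow> z \<in> C \<longleftrightarrow> z' \<in> C"
    unfolding cylinder_sets_def by blast
  have "z \<in> B \<union> C \<longleftrightarrow> z' \<in> B \<union> C" if "\<forall>j<max n m. z j = z' j" for z z'
    using n[of z z'] m[of z z'] that by simp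
  then show "B \<union> C \<in> cylinder_sets"
    using B C unfolding cylinder_sets_def by blast
qed

lemma sets_sequence_borel_eq_sigma_cylinder_sets:
  "sets sequence_borel = sigma_sets UNIV cylinder_sets"
proof -
  let ?E = "{{z :: nat \<Rightarrow> real. z i \<in> A} | i A. A \<in> sets (borel :: real measure)}"
  have "sets sequence_borel = sigma_sets UNIV ?E"
    using sets_PiM_single[of "UNIV :: nat set" "\<lambda>_. borel :: real measure"] by simp
  also have "\<dots> = sigma_sets UNIV cylinder_sets"
  proof (rule sigma_sets_eqI)
    fix E assume "E \<in> ?E"
    then obtain i A where E: "E = {z. z i \<in> A}" and "A \<in> sets borel" by auto
    then have "E \<in> sets sequence_borel"
      using measurable_sets[OF measurable_component_singleton[of i UNIV "\<lambda>_. borel :: real measure"]]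
      by (auto simp: vimage_def space_PiM)
    moreover have "\<forall>z z'. (\<forall>j<Suc i. z j = z' j) \<longrightarrow> (z \<in> E \<longleftrightarrow> z' \<in> E)"
      by (simp add: E)
    ultimately show "E \<in> sigma_sets UNIV cylinder_sets"
      unfolding cylinder_sets_def by blast
  next
    fix B assume "B \<in> cylinder_sets"
    then show "B \<in> sigma_sets UNIV ?E"
      using calculation by (simp add: cylinder_sets_def)
  qed
  finally show ?thesis .
qed

text \<open>A cylinder set only sees finitely many coordinates, so the finite estimate applies to it;
  cylinder sets generate the product sigma-algebra.\<close>
lemma measure_laplace_product_translate_le:
  assumes d: "summable (\<lambda>j. \<bar>d j\<bar>)" and A: "A \<in> sets sequence_borel"
  shows "measure laplace_product (translate d -` A)
    \<le> exp (sqrt 2 * (\<Sum>j. \<bar>d j\<bar>)) * measure laplace_product A"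
proof -
  interpret P: prob_space laplace_product by (rule prob_space_laplace_product)
  define \<nu> where "\<nu> = distr laplace_product sequence_borel (translate d)"
  have translate_measurable: "translate d \<in> measurable laplace_product sequence_borel"
    by (simp add: measurable_cong_sets[OF sets_laplace_product refl])
  interpret \<nu>: prob_space \<nu>
    unfolding \<nu>_def by (rule P.prob_space_distr[OF translate_measurable])
  have \<nu>_eq: "measure \<nu> B = measure laplace_product (translate d -` B)" if "B \<in> sets sequence_borel" for B
    unfolding \<nu>_def using that translate_measurable by (subst measure_distr) auto
  have "measure \<nu> A \<le> exp (sqrt 2 * (\<Sum>j. \<bar>d j\<bar>)) * measure laplace_product A"
  proof (rule measure_le_extend_from_algebra[where G=cylinder_sets])
    show "finite_measure laplace_product" "finite_measure \<nu>" by unfold_locales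
    show "space laplace_product = UNIV" "sets \<nu> = sets laplace_product" by (simp_all add: \<nu>_def)
    show "sets laplace_product = sigma_sets UNIV cylinder_sets"
      by (simp add: sets_sequence_borel_eq_sigma_cylinder_sets)
    show "algebra UNIV cylinder_sets" by (rule algebra_cylinder_sets)
    show "0 \<le> exp (sqrt 2 * (\<Sum>j. \<bar>d j\<bar>))" by simp
    show "A \<in> sets laplace_product" using A by simp
  next
    fix B assume "B \<in> cylinder_sets"
    then obtain n where B: "B \<in> sets sequence_borel"
      and n: "\<And>z z'. \<forall>j<n. z j = z' j \<Longrightarrow> z \<in> B \<longleftrightarrow> z' \<in> B"
      unfolding cylinder_sets_def by blast
    define d\<^sub>n where "d\<^sub>n j = (if j < n then d j else 0)" for j
    have "translate d z \<in> B \<longleftrightarrow> translate d\<^sub>n z \<in> B" for z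
      by (rule n) (simp add: translate_def d\<^sub>n_def)
    then have "translate d -` B = translate d\<^sub>n -` B"
      by blast
    then have "measure \<nu> B = measure laplace_product (translate d\<^sub>n -` B)"
      using \<nu>_eq[OF B] by simp
    also have "\<dots> \<le> exp (sqrt 2 * (\<Sum>j<n. \<bar>d\<^sub>n j\<bar>)) * measure laplace_product B"
      using emeasure_laplace_product_translate_finite_le[of n d\<^sub>n B] B
      by (simp add: d\<^sub>n_def P.emeasure_eq_measure ennreal_mult[symmetric] ennreal_le_iff)
    also have "\<dots> \<le> exp (sqrt 2 * (\<Sum>j. \<bar>d j\<bar>)) * measure laplace_product B"
      using sum_le_suminf[OF d, of "{..<n}"] by (intro mult_right_mono) (auto simp: d\<^sub>n_def)
    finally show "measure \<nu> B \<le> exp (sqrt 2 * (\<Sum>j. \<bar>d j\<bar>)) * measure laplace_product B" .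
  qed
  then show ?thesis
    using \<nu>_eq[OF A] by simp
qed

section \<open>Synthesis from coefficient sequences\<close>

definition synthesis_domain :: "(nat \<Rightarrow> real) \<Rightarrow> (nat \<Rightarrow> real) set" where
  "synthesis_domain lam = {z. summable (\<lambda>j. lam j * (z j)\<^sup>2)}"

definition partial_synthesis :: "(nat \<Rightarrow> real) \<Rightarrow> (nat \<Rightarrow> 'a::real_normed_vector) \<Rightarrow> nat \<Rightarrow> (nat \<Rightarrow> real) \<Rightarrow> 'a"
  where "partial_synthesis lam \<phi> n z = (\<Sum>j<n. (sqrt (lam j) * z j) *\<^sub>R \<phi> j)"

definition synthesis :: "(nat \<Rightarrow> real) \<Rightarrow> (nat \<Rightarrow> 'a::real_normed_vector) \<Rightarrow> (nat \<Rightarrow> real) \<Rightarrow> 'a" where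
  "synthesis lam \<phi> z =
    (if z \<in> synthesis_domain lam then lim (\<lambda>n. partial_synthesis lam \<phi> n z) else 0)"

lemma continuous_on_sequence_borel_measurable:
  fixes f :: "(nat \<Rightarrow> real) \<Rightarrow> 'b::topological_space"
  assumes "continuous_on UNIV f"
  shows "f \<in> borel_measurable sequence_borel"
  using borel_measurable_continuous_onI[OF assms]
  by (simp add: measurable_cong_sets[OF sets_PiM_equal_borel[symmetric] refl])

lemma synthesis_domain_sets[measurable]: "synthesis_domain lam \<in> sets sequence_borel"
proof -
  have "synthesis_domain lam = {z \<in> space sequence_borel. Cauchy (\<lambda>n. \<Sum>j<n. lam j * (z j)\<^sup>2)}"
    by (simp add: synthesis_domain_def summable_iff_convergent Cauchy_convergent_iff)
  also have "\<dots> \<in> sets sequence_borel"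
    by (intro sets_Collect_Cauchy continuous_on_sequence_borel_measurable continuous_intros
        continuous_on_product_coordinates)
  finally show ?thesis .
qed

lemma partial_synthesis_measurable[measurable]:
  "partial_synthesis lam \<phi> n \<in> borel_measurable sequence_borel"
  unfolding partial_synthesis_def
  by (intro continuous_on_sequence_borel_measurable continuous_intros continuous_on_product_coordinates)

context
  fixes lam :: "nat \<Rightarrow> real" and \<phi> :: "nat \<Rightarrow> 'a::{real_inner,complete_space}"
  assumes orthonormal: "\<And>i j. \<phi> i \<bullet> \<phi> j = (if i = j then 1 else 0)"
    and lam_nonneg: "\<And>j. 0 \<le> lam j"
begin

lemma LIMSEQ_partial_synthesis:
  assumes "z \<in> synthesis_domain lam"
  shows "(\<lambda>n. partial_synthesis lam \<phi> n z) \<longlonglongrightarrow> synthesis lam \<phi> z"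
proof -
  have "summable (\<lambda>j. (sqrt (lam j) * z j)\<^sup>2)"
    using assms lam_nonneg by (simp add: synthesis_domain_def power_mult_distrib)
  then have "convergent (\<lambda>n. partial_synthesis lam \<phi> n z)"
    unfolding partial_synthesis_def by (rule convergent_orthonormal_series[OF orthonormal])
  then show ?thesis
    using assms by (simp add: synthesis_def convergent_LIMSEQ_iff)
qed

lemma synthesis_measurable[measurable]: "synthesis lam \<phi> \<in> borel_measurable sequence_borel"
proof (rule borel_measurable_LIMSEQ_metric)
  show "(\<lambda>z. if z \<in> synthesis_domain lam then partial_synthesis lam \<phi> n z else 0)
      \<in> borel_measurable sequence_borel" for n
    by measurable
  show "(\<lambda>n. if z \<in> synthesis_domain lam then partial_synthesis lam \<phi> n z else 0)
      \<longlonglongrightarrow> synthesis lam \<phi> z" for z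
  proof (cases "z \<in> synthesis_domain lam")
    case True
    then show ?thesis by (simp add: LIMSEQ_partial_synthesis)
  next
    case False
    then show ?thesis by (simp add: synthesis_def)
  qed
qed

lemma inner_synthesis:
  "z \<in> synthesis_domain lam \<Longrightarrow> synthesis lam \<phi> z \<bullet> \<phi> k = sqrt (lam k) * z k"
  using LIMSEQ_partial_synthesis[unfolded partial_synthesis_def]
  by (rule inner_orthonormal_series_limit[OF orthonormal])

end

lemma synthesis_translate:
  fixes \<phi> :: "nat \<Rightarrow> 'a::{real_inner,complete_space}"
  assumes onb: "orthonormal_basis \<phi>" and lam_pos: "\<And>j. 0 < lam j"
    and z: "z \<in> synthesis_domain lam"
  shows "synthesis lam \<phi> (translate (\<lambda>j. (v \<bullet> \<phi> j) / sqrt (lam j)) z) = synthesis lam \<phi> z + v"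
proof -
  note orthonormal = orthonormal_basisD[OF onb]
  have lam_nonneg: "0 \<le> lam j" and lam_nonzero: "lam j \<noteq> 0" for j
    using lam_pos[of j] by simp_all
  let ?d = "\<lambda>j. (v \<bullet> \<phi> j) / sqrt (lam j)"
  have scaled: "sqrt (lam j) * ?d j = v \<bullet> \<phi> j" for j
    using lam_pos[of j] by simp
  have "norm (lam j * (z j + ?d j)\<^sup>2) \<le> 2 * (lam j * (z j)\<^sup>2) + 2 * (v \<bullet> \<phi> j)\<^sup>2" for j
  proof -
    have "sqrt (lam j) * (z j + ?d j) = sqrt (lam j) * z j + v \<bullet> \<phi> j"
      by (simp only: distrib_left scaled)
    then have "lam j * (z j + ?d j)\<^sup>2 = (sqrt (lam j) * z j + v \<bullet> \<phi> j)\<^sup>2"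
      using lam_nonneg[of j] by (metis power_mult_distrib real_sqrt_pow2)
    also have "\<dots> \<le> 2 * (sqrt (lam j) * z j)\<^sup>2 + 2 * (v \<bullet> \<phi> j)\<^sup>2"
      using zero_le_power2[of "sqrt (lam j) * z j - v \<bullet> \<phi> j"]
      by (simp add: power2_eq_square algebra_simps)
    finally show ?thesis
      using lam_nonneg[of j] by (simp add: power_mult_distrib)
  qed
  moreover have "summable (\<lambda>j. 2 * (lam j * (z j)\<^sup>2) + 2 * (v \<bullet> \<phi> j)\<^sup>2)"
    using z summable_bessel[OF orthonormal]
    by (intro summable_add summable_mult) (simp_all add: synthesis_domain_def)
  ultimately have z': "translate ?d z \<in> synthesis_domain lam"
    unfolding synthesis_domain_def translate_def by (auto intro: summable_comparison_test')
  have "partial_synthesis lam \<phi> n (translate ?d z)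
      = partial_synthesis lam \<phi> n z + (\<Sum>j<n. (v \<bullet> \<phi> j) *\<^sub>R \<phi> j)" for n
    by (simp add: partial_synthesis_def translate_def distrib_left scaleR_add_left lam_nonzero sum.distrib)
  then have "(\<lambda>n. partial_synthesis lam \<phi> n (translate ?d z)) \<longlonglongrightarrow> synthesis lam \<phi> z + v"
    by (simp add: tendsto_add LIMSEQ_partial_synthesis[OF orthonormal lam_nonneg z]
        orthonormal_basis_expansion[OF onb])
  then show ?thesis
    using LIMSEQ_partial_synthesis[OF orthonormal lam_nonneg z'] LIMSEQ_unique by blast
qed

section \<open>Infinite-dimensional Laplace processes\<close>

lemma AE_inner_eq_of_L2_convergence:
  fixes X :: "nat \<Rightarrow> 'w \<Rightarrow> 'a::real_inner" and Z :: "'w \<Rightarrow> 'a"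
  assumes L2: "(\<lambda>n. \<integral>\<^sup>+\<omega>. ennreal ((norm (X n \<omega> - Z \<omega>))\<^sup>2) \<partial>M) \<longlonglongrightarrow> 0"
    and coordinate: "\<And>n \<omega>. N \<le> n \<Longrightarrow> X n \<omega> \<bullet> u = c \<omega>"
    and u: "norm u \<le> 1"
    and measurable: "(\<lambda>\<omega>. c \<omega> - Z \<omega> \<bullet> u) \<in> borel_measurable M"
  shows "AE \<omega> in M. Z \<omega> \<bullet> u = c \<omega>"
proof -
  let ?g = "\<lambda>\<omega>. ennreal ((c \<omega> - Z \<omega> \<bullet> u)\<^sup>2)"
  have g_le: "?g \<omega> \<le> ennreal ((norm (X n \<omega> - Z \<omega>))\<^sup>2)" if "N \<le> n" for n \<omega>
  proof -
    have "\<bar>c \<omega> - Z \<omega> \<bullet> u\<bar> = \<bar>(X n \<omega> - Z \<omega>) \<bullet> u\<bar>"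
      using coordinate[OF that] by (simp add: inner_diff_left)
    also have "\<dots> \<le> norm (X n \<omega> - Z \<omega>)"
      using Cauchy_Schwarz_ineq2[of "X n \<omega> - Z \<omega>" u] u
      by (meson mult_left_le norm_ge_zero order_trans)
    finally show ?thesis
      by (intro ennreal_leI) (metis abs_ge_zero power2_abs power_mono)
  qed
  have "(\<integral>\<^sup>+\<omega>. ?g \<omega> \<partial>M) \<le> 0"
  proof (rule tendsto_le[OF sequentially_bot L2 tendsto_const])
    show "\<forall>\<^sub>F n in sequentially. (\<integral>\<^sup>+\<omega>. ?g \<omega> \<partial>M) \<le> (\<integral>\<^sup>+\<omega>. ennreal ((norm (X n \<omega> - Z \<omega>))\<^sup>2) \<partial>M)"
      using eventually_ge_at_top[of N] by eventually_elim (intro nn_integral_mono g_le)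
  qed
  then have "AE \<omega> in M. ?g \<omega> = 0"
    using nn_integral_0_iff_AE[of ?g M] measurable by simp
  then show ?thesis
    by eventually_elim simp
qed

lemma distr_indep_laplace_eq_laplace_product:
  assumes M: "prob_space M" and indep: "prob_space.indep_vars M (\<lambda>_. borel) Zs UNIV"
    and laplace: "\<And>j. distributed M lborel (Zs j) (\<lambda>x. ennreal (laplace_density x))"
  shows "distr M sequence_borel (\<lambda>\<omega> j. Zs j \<omega>) = laplace_product"
proof -
  interpret M: prob_space M by (rule M)
  have Zs_measurable: "Zs j \<in> borel_measurable M" for j
    using laplace[of j] by (auto simp: distributed_def)
  have "distr M borel (Zs j) = laplace_measure" for j
  proof -
    have "distr M borel (Zs j) = distr M lborel (Zs j)"
      by (rule distr_cong) simp_all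
    then show ?thesis
      using laplace[of j] by (simp add: distributed_def laplace_measure_def)
  qed
  then show ?thesis
    using M.indep_vars_iff_distr_eq_PiM[where I=UNIV and M'="\<lambda>_. borel" and X=Zs] indep Zs_measurable
    by (simp add: laplace_product_def restrict_UNIV)
qed

lemma ICLP_coefficients:
  fixes \<phi> :: "nat \<Rightarrow> 'a::{real_inner,complete_space}"
  assumes onb: "orthonormal_basis \<phi>" and lam_nonneg: "\<And>j. 0 \<le> lam j"
    and M: "prob_space M" and Z: "is_ICLP M lam \<phi> 0 Z"
  obtains \<xi> where "\<xi> \<in> measurable M sequence_borel"
    and "distr M sequence_borel \<xi> = laplace_product"
    and "AE \<omega> in M. \<xi> \<omega> \<in> synthesis_domain lam \<and> synthesis lam \<phi> (\<xi> \<omega>) = Z \<omega>"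
proof -
  note orthonormal = orthonormal_basisD[OF onb]
  obtain Zs :: "nat \<Rightarrow> _" where indep: "prob_space.indep_vars M (\<lambda>_. borel) Zs UNIV"
    and laplace: "\<And>j. distributed M lborel (Zs j) (\<lambda>x. ennreal (laplace_density x))"
    and L2: "(\<lambda>n. \<integral>\<^sup>+\<omega>. ennreal ((norm (partial_synthesis lam \<phi> n (\<lambda>j. Zs j \<omega>) - Z \<omega>))\<^sup>2) \<partial>M)
      \<longlonglongrightarrow> 0"
    using Z by (auto simp: is_ICLP_def partial_synthesis_def)
  have Z_measurable: "Z \<in> borel_measurable M" using Z by (simp add: is_ICLP_def)
  have [measurable]: "Zs j \<in> borel_measurable M" for j
    using laplace[of j] by (auto simp: distributed_def)
  have coordinates: "AE \<omega> in M. Z \<omega> \<bullet> \<phi> k = sqrt (lam k) * Zs k \<omega>" for k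
  proof (rule AE_inner_eq_of_L2_convergence[OF L2])
    show "partial_synthesis lam \<phi> n (\<lambda>j. Zs j \<omega>) \<bullet> \<phi> k = sqrt (lam k) * Zs k \<omega>"
      if "Suc k \<le> n" for n \<omega>
      using that by (simp add: partial_synthesis_def inner_sum_orthonormal[OF orthonormal])
    show "norm (\<phi> k) \<le> 1"
      using orthonormal[of k k] by (simp add: norm_eq_sqrt_inner)
    have "(\<lambda>\<omega>. Z \<omega> \<bullet> \<phi> k) \<in> borel_measurable M"
      by (rule borel_measurable_continuous_on[OF _ Z_measurable]) (intro continuous_intros)
    then show "(\<lambda>\<omega>. sqrt (lam k) * Zs k \<omega> - Z \<omega> \<bullet> \<phi> k) \<in> borel_measurable M"
      by measurable
  qed
  show ?thesis
  proof
    show "(\<lambda>\<omega> j. Zs j \<omega>) \<in> measurable M sequence_borel"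
      by (rule measurable_PiM_single') auto
    show "distr M sequence_borel (\<lambda>\<omega> j. Zs j \<omega>) = laplace_product"
      by (rule distr_indep_laplace_eq_laplace_product[OF M indep laplace])
    have "AE \<omega> in M. \<forall>k. Z \<omega> \<bullet> \<phi> k = sqrt (lam k) * Zs k \<omega>"
      using coordinates by (simp add: AE_all_countable)
    then show "AE \<omega> in M. (\<lambda>j. Zs j \<omega>) \<in> synthesis_domain lam \<and> synthesis lam \<phi> (\<lambda>j. Zs j \<omega>) = Z \<omega>"
    proof eventually_elim
      case (elim \<omega>)
      then have "lam j * (Zs j \<omega>)\<^sup>2 = (Z \<omega> \<bullet> \<phi> j)\<^sup>2" for j
        using lam_nonneg[of j] by (simp add: power_mult_distrib)
      then have domain: "(\<lambda>j. Zs j \<omega>) \<in> synthesis_domain lam"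
        using summable_bessel[OF orthonormal] by (simp add: synthesis_domain_def)
      moreover have "synthesis lam \<phi> (\<lambda>j. Zs j \<omega>) = Z \<omega>"
        by (rule orthonormal_basis_eqI[OF onb]) (simp add: inner_synthesis[OF orthonormal lam_nonneg domain] elim)
      ultimately show ?case by simp
    qed
  qed
qed

lemma measure_distr_eq_Collect:
  assumes "X \<in> measurable M N" and "A \<in> sets N"
  shows "measure (distr M N X) A = measure M {\<omega> \<in> space M. X \<omega> \<in> A}"
  using assms by (simp add: measure_distr vimage_def Int_def conj_commute)

lemma ICLP_translate_le:
  fixes \<phi> :: "nat \<Rightarrow> 'a::{real_inner,complete_space}"
  assumes onb: "orthonormal_basis \<phi>" and lam_pos: "\<And>j. 0 < lam j"
    and M: "prob_space M" and Z: "is_ICLP M lam \<phi> 0 Z"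
    and v: "in_H1C lam \<phi> v" and A: "A \<in> sets borel"
  shows "measure M {\<omega> \<in> space M. Z \<omega> + v \<in> A}
    \<le> exp (sqrt 2 * norm1C lam \<phi> v) * measure M {\<omega> \<in> space M. Z \<omega> \<in> A}"
proof -
  interpret M: prob_space M by (rule M)
  note orthonormal = orthonormal_basisD[OF onb]
  have lam_nonneg: "0 \<le> lam j" for j using lam_pos[of j] by simp
  obtain \<xi> where \<xi>_measurable[measurable]: "\<xi> \<in> measurable M sequence_borel"
    and law: "distr M sequence_borel \<xi> = laplace_product"
    and synthesizes: "AE \<omega> in M. \<xi> \<omega> \<in> synthesis_domain lam \<and> synthesis lam \<phi> (\<xi> \<omega>) = Z \<omega>"
    using ICLP_coefficients[OF onb lam_nonneg M Z] by blast
  have Z_measurable[measurable]: "Z \<in> borel_measurable M" using Z by (simp add: is_ICLP_def)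
  have [measurable]: "synthesis lam \<phi> \<in> borel_measurable sequence_borel"
    by (rule synthesis_measurable[OF orthonormal lam_nonneg])
  define d where "d = (\<lambda>j. (v \<bullet> \<phi> j) / sqrt (lam j))"
  have abs_d: "\<bar>d j\<bar> = \<bar>v \<bullet> \<phi> j\<bar> / sqrt (lam j)" for j
    using lam_nonneg[of j] by (simp add: d_def abs_divide abs_of_nonneg)
  define B where "B = synthesis lam \<phi> -` A"
  have B[measurable]: "B \<in> sets sequence_borel"
    using measurable_sets[of "synthesis lam \<phi>" sequence_borel borel A] A by (simp add: B_def)
  have coefficient_law: "measure M {\<omega> \<in> space M. \<xi> \<omega> \<in> S} = measure laplace_product S"
    if "S \<in> sets sequence_borel" for S
    using measure_distr_eq_Collect[OF \<xi>_measurable that] by (simp add: law)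
  have [measurable]: "(\<lambda>\<omega>. Z \<omega> + v) \<in> borel_measurable M"
    by (rule borel_measurable_continuous_on[OF _ Z_measurable]) (intro continuous_intros)
  have "AE \<omega> in M. Z \<omega> + v \<in> A \<longleftrightarrow> \<xi> \<omega> \<in> translate d -` B"
    using synthesizes by eventually_elim (simp add: B_def d_def synthesis_translate[OF onb lam_pos])
  then have "measure M {\<omega> \<in> space M. Z \<omega> + v \<in> A} = measure M {\<omega> \<in> space M. \<xi> \<omega> \<in> translate d -` B}"
    using vimage_translate_sets[OF B] A by (intro M.finite_measure_eq_AE) auto
  also have "\<dots> = measure laplace_product (translate d -` B)"
    by (rule coefficient_law[OF vimage_translate_sets[OF B]])
  also have "\<dots> \<le> exp (sqrt 2 * (\<Sum>j. \<bar>d j\<bar>)) * measure laplace_product B"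
    using v by (intro measure_laplace_product_translate_le B) (simp add: in_H1C_def abs_d)
  also have "(\<Sum>j. \<bar>d j\<bar>) = norm1C lam \<phi> v"
    by (simp add: norm1C_def abs_d)
  also have "measure laplace_product B = measure M {\<omega> \<in> space M. Z \<omega> \<in> A}"
    using synthesizes A
    by (subst coefficient_law[OF B, symmetric], intro M.finite_measure_eq_AE) (auto simp: B_def)
  finally show ?thesis .
qed

lemma in_H1C_scaleR_diff:
  assumes "\<And>j. 0 \<le> lam j" and "in_H1C lam \<phi> u" and "in_H1C lam \<phi> w"
  shows "in_H1C lam \<phi> (c *\<^sub>R (u - w))"
proof -
  have "summable (\<lambda>j. \<bar>c\<bar> * (\<bar>u \<bullet> \<phi> j\<bar> / sqrt (lam j) + \<bar>w \<bullet> \<phi> j\<bar> / sqrt (lam j)))"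
    using assms(2,3) unfolding in_H1C_def by (intro summable_mult summable_add)
  then show ?thesis
    unfolding in_H1C_def
  proof (rule summable_comparison_test')
    fix j
    show "norm (\<bar>(c *\<^sub>R (u - w)) \<bullet> \<phi> j\<bar> / sqrt (lam j))
        \<le> \<bar>c\<bar> * (\<bar>u \<bullet> \<phi> j\<bar> / sqrt (lam j) + \<bar>w \<bullet> \<phi> j\<bar> / sqrt (lam j))"
      using assms(1)[of j]
      by (auto simp: inner_diff_left abs_mult add_divide_distrib[symmetric]
          intro!: divide_right_mono mult_left_mono abs_triangle_ineq4)
  qed
qed

lemma norm1C_scaleR: "in_H1C lam \<phi> u \<Longrightarrow> norm1C lam \<phi> (c *\<^sub>R u) = \<bar>c\<bar> * norm1C lam \<phi> u"
  unfolding norm1C_def in_H1C_def by (simp add: abs_mult suminf_mult[symmetric] mult.assoc)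

lemma norm1C_le_sensitivity:
  "D \<in> Ds \<Longrightarrow> D' \<in> Ds \<Longrightarrow> adjacent D D' \<Longrightarrow>
    ereal (norm1C lam \<phi> (f D - f D')) \<le> sensitivity lam \<phi> Ds f"
  unfolding sensitivity_def by (rule SUP_upper2[of "(D, D')"]) auto

lemma ICLP_mechanism_translate_le:
  fixes \<phi> :: "nat \<Rightarrow> 'a::{real_inner,complete_space}"
  assumes onb: "orthonormal_basis \<phi>" and lam_pos: "\<And>j. 0 < lam j"
    and M: "prob_space M" and Z: "is_ICLP M lam \<phi> 0 Z"
    and u: "in_H1C lam \<phi> u" and w: "in_H1C lam \<phi> w" and \<sigma>: "0 < \<sigma>" and A: "A \<in> sets borel"
  shows "measure (distr M borel (\<lambda>\<omega>. u + \<sigma> *\<^sub>R Z \<omega>)) A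
    \<le> exp (sqrt 2 * norm1C lam \<phi> (u - w) / \<sigma>) * measure (distr M borel (\<lambda>\<omega>. w + \<sigma> *\<^sub>R Z \<omega>)) A"
proof -
  have lam_nonneg: "0 \<le> lam j" for j using lam_pos[of j] by simp
  have Z_measurable: "Z \<in> borel_measurable M" using Z by (simp add: is_ICLP_def)
  have mechanism_measurable: "(\<lambda>\<omega>. x + \<sigma> *\<^sub>R Z \<omega>) \<in> borel_measurable M" for x
    by (rule borel_measurable_continuous_on[OF _ Z_measurable]) (intro continuous_intros)
  define v where "v = (1 / \<sigma>) *\<^sub>R (u - w)"
  define g where "g x = w + \<sigma> *\<^sub>R x" for x
  have g_A: "g -` A \<in> sets borel"
    using A unfolding g_def
    by (intro measurable_sets_borel[OF borel_measurable_continuous_onI]) (intro continuous_intros)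
  have v: "in_H1C lam \<phi> v"
    unfolding v_def using lam_nonneg u w by (rule in_H1C_scaleR_diff)
  have "norm1C lam \<phi> v = norm1C lam \<phi> (u - w) / \<sigma>"
    unfolding v_def using \<sigma> in_H1C_scaleR_diff[where c=1, OF lam_nonneg u w]
    by (simp add: norm1C_scaleR)
  moreover have "u + \<sigma> *\<^sub>R x = g (x + v)" for x
    using \<sigma> by (simp add: g_def v_def algebra_simps)
  then have "measure (distr M borel (\<lambda>\<omega>. u + \<sigma> *\<^sub>R Z \<omega>)) A = measure M {\<omega> \<in> space M. Z \<omega> + v \<in> g -` A}"
    unfolding measure_distr_eq_Collect[OF mechanism_measurable A] by simp
  moreover have "measure (distr M borel (\<lambda>\<omega>. w + \<sigma> *\<^sub>R Z \<omega>)) A = measure M {\<omega> \<in> space M. Z \<omega> \<in> g -` A}"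
    unfolding measure_distr_eq_Collect[OF mechanism_measurable A] by (simp add: g_def)
  ultimately show ?thesis
    using ICLP_translate_le[OF onb lam_pos M Z v g_A] by (simp add: mult.assoc)
qed

theorem theorem4:
  fixes M :: "'w measure" and Z :: "'w \<Rightarrow> 'a::{real_inner,complete_space}"
    and C :: "'a \<Rightarrow> 'a" and lam :: "nat \<Rightarrow> real" and \<phi> :: "nat \<Rightarrow> 'a"
    and Ds :: "'r list set" and f :: "'r list \<Rightarrow> 'a" and \<epsilon> :: real
  assumes C_lin: "bounded_linear C"
    and C_eig: "\<And>j. C (\<phi> j) = lam j *\<^sub>R \<phi> j"
    and onb: "orthonormal_basis \<phi>"
    and lam_pos: "\<And>j. lam j > 0"
    and lam_dec: "decseq lam"
    and lam_trace: "summable lam"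
    and f_H1C: "\<And>D. D \<in> Ds \<Longrightarrow> in_H1C lam \<phi> (f D)"
    and sens_pos: "0 < sensitivity lam \<phi> Ds f"
    and sens_fin: "sensitivity lam \<phi> Ds f < \<infinity>"
    and eps_pos: "\<epsilon> > 0"
    and M: "prob_space M"
    and Z: "is_ICLP M lam \<phi> 0 Z"
  shows "differentially_private \<epsilon> Ds
           (\<lambda>D. distr M borel
                  (\<lambda>\<omega>. f D + (sqrt 2 * real_of_ereal (sensitivity lam \<phi> Ds f) / \<epsilon>) *\<^sub>R Z \<omega>))"
proof -
  obtain \<Delta> where sens: "sensitivity lam \<phi> Ds f = ereal \<Delta>" and \<Delta>_pos: "0 < \<Delta>"
    using sens_pos sens_fin by (cases "sensitivity lam \<phi> Ds f") auto
  define \<sigma> where "\<sigma> = sqrt 2 * \<Delta> / \<epsilon>"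
  have \<sigma>_pos: "0 < \<sigma>" using \<Delta>_pos eps_pos by (simp add: \<sigma>_def)
  show ?thesis
    unfolding differentially_private_def sens real_of_ereal.simps \<sigma>_def[symmetric]
  proof (intro ballI impI)
    fix D D' and A :: "'a set" assume D: "D \<in> Ds" "D' \<in> Ds" "adjacent D D'" and A: "A \<in> sets borel"
    have "norm1C lam \<phi> (f D - f D') \<le> \<Delta>"
      using norm1C_le_sensitivity[OF D, of lam \<phi> f] sens by simp
    then have "exp (sqrt 2 * norm1C lam \<phi> (f D - f D') / \<sigma>) \<le> exp \<epsilon>"
      using eps_pos \<Delta>_pos by (simp add: \<sigma>_def field_simps)
    then show "measure (distr M borel (\<lambda>\<omega>. f D + \<sigma> *\<^sub>R Z \<omega>)) A
        \<le> exp \<epsilon> * measure (distr M borel (\<lambda>\<omega>. f D' + \<sigma> *\<^sub>R Z \<omega>)) A"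
      using ICLP_mechanism_translate_le[OF onb lam_pos M Z f_H1C f_H1C \<sigma>_pos A] D
      by (meson mult_right_mono measure_nonneg order_trans)
  qed
qed

end
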